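(* There is a universal constant $C>0$ such that the following holds. Let $(\pi,Q)$ and $(\tilde\pi,\tilde Q)$ be two reversible Markov generators (with their stationary distributions) on a finite set $\Omega$, let $\mathcal W$ be a $(Q,\tilde Q)$-flow, and suppose $\pi(\omega)\le a\,\tilde\pi(\omega)$ for all $\omega\in\Omega$, for some $a>0$. Suppose $(\Omega,\tilde\pi,\tilde Q)$ satisfies the MLSI with constant $\tilde\alpha(\tilde Q)$. Then for every $r\ge2$, the $r$-regularized MLSI constant $\alpha_r(Q)$ of $(\Omega,\pi,Q)$ (the smallest constant in the $r$-regularized MLSI) satisfies $$\alpha_r(Q)\le C\,a\,A(\mathcal W,r)\,\tilde\alpha(\tilde Q),$$ where $$A(\mathcal W,r):=\max_{(\omega,\omega'):\,\omega\ne\omega',\,Q(\omega,\omega')>0}\frac{1}{\pi(\omega)Q(\omega,\omega')}\sum_{\mathcal P\in\Gamma(Q,\tilde Q):\,(\omega,\omega')\in\mathcal P}\mathcal W(\mathcal P)\big(1+(|\mathcal P|-1)^2\log r\big),$$ $|\mathcal P|$ is the length (number of steps) of $\mathcal P$, and $(\omega,\omega')\in\mathcal P$ means that $\omega,\omega'$ are consecutive vertices of $\mathcal P$.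
   Context: For a positive function $f$, ${\rm Ent}_\pi(f):=\mathbb E_\pi[f(\log f-\log\mathbb E_\pi f)]$, $\mathcal E_\pi(\log f,f):=\frac12\sum_{\omega,\omega'}\pi(\omega)Q(\omega,\omega')(f(\omega)-f(\omega'))\log\frac{f(\omega)}{f(\omega')}$ (analogously for $(\tilde\pi,\tilde Q)$). MLSI with constant $\alpha$: ${\rm Ent}_\pi(f)\le\alpha\,\mathcal E_\pi(\log f,f)$ for all $f:\Omega\to(0,\infty)$. The graph induced by $Q$ on $\Omega$ joins distinct $\omega,\omega'$ iff $Q(\omega,\omega')\ne0$, with graph distance ${\rm dist}$. A function $f>0$ is $r$-regular if $f(\omega)/f(\omega')\le r^{{\rm dist}(\omega,\omega')}$ for all $\omega,\omega'$; the $r$-regularized MLSI with constant $\alpha_r$ means ${\rm Ent}_\pi(f)\le\alpha_r\mathcal E_\pi(\log f,f)$ for all $r$-regular $f$. For $x,y$ with $\tilde Q(x,y)>0$, $\mathcal P_{x,y}$ is the set of paths $x_0=x,x_1,\dots,x_k=y$ ($k\ge1$) with $Q(x_i,x_{i+1})>0$ for all $i$; $\Gamma(Q,\tilde Q):=\bigcup_{x,y:\tilde Q(x,y)>0}\mathcal P_{x,y}$. A $(Q,\tilde Q)$-flow is a function $\mathcal W:\Gamma(Q,\tilde Q)\to[0,1]$ with $\sum_{P\in\mathcal P_{x,y}}\mathcal W(P)=\tilde\pi(x)\tilde Q(x,y)$ for all $x,y$ with $\tilde Q(x,y)>0$. *)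

theory Defs
  imports "HOL-Analysis.Analysis"
begin

text \<open>State space: a finite set \<open>\<Omega>\<close> of naturals (so that the universal constant
  quantifies over all finite state spaces).  Generators are functions
  \<open>Q :: nat \<Rightarrow> nat \<Rightarrow> real\<close>, only their values on \<open>\<Omega>\<close> matter.\<close>

definition markov_generator :: "nat set \<Rightarrow> (nat \<Rightarrow> nat \<Rightarrow> real) \<Rightarrow> bool" where
  "markov_generator \<Omega> Q \<longleftrightarrow>
     (\<forall>x\<in>\<Omega>. \<forall>y\<in>\<Omega>. x \<noteq> y \<longrightarrow> Q x y \<ge> 0) \<and>
     (\<forall>x\<in>\<Omega>. (\<Sum>y\<in>\<Omega>. Q x y) = 0)"

definition reversible_gen :: "nat set \<Rightarrow> (nat \<Rightarrow> real) \<Rightarrow> (nat \<Rightarrow> nat \<Rightarrow> real) \<Rightarrow> bool" where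
  "reversible_gen \<Omega> \<pi> Q \<longleftrightarrow>
     markov_generator \<Omega> Q \<and>
     (\<forall>x\<in>\<Omega>. \<pi> x > 0) \<and> (\<Sum>x\<in>\<Omega>. \<pi> x) = 1 \<and>
     (\<forall>x\<in>\<Omega>. \<forall>y\<in>\<Omega>. \<pi> x * Q x y = \<pi> y * Q y x)"

definition Ent :: "nat set \<Rightarrow> (nat \<Rightarrow> real) \<Rightarrow> (nat \<Rightarrow> real) \<Rightarrow> real" where
  "Ent \<Omega> \<pi> f = (\<Sum>x\<in>\<Omega>. \<pi> x * (f x * (ln (f x) - ln (\<Sum>y\<in>\<Omega>. \<pi> y * f y))))"

definition Dir :: "nat set \<Rightarrow> (nat \<Rightarrow> real) \<Rightarrow> (nat \<Rightarrow> nat \<Rightarrow> real) \<Rightarrow> (nat \<Rightarrow> real) \<Rightarrow> real" where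
  "Dir \<Omega> \<pi> Q f = (1/2) * (\<Sum>x\<in>\<Omega>. \<Sum>y\<in>\<Omega>. \<pi> x * Q x y * (f x - f y) * ln (f x / f y))"

definition MLSI :: "nat set \<Rightarrow> (nat \<Rightarrow> real) \<Rightarrow> (nat \<Rightarrow> nat \<Rightarrow> real) \<Rightarrow> real \<Rightarrow> bool" where
  "MLSI \<Omega> \<pi> Q \<alpha> \<longleftrightarrow>
     (\<forall>f. (\<forall>x\<in>\<Omega>. f x > 0) \<longrightarrow> Ent \<Omega> \<pi> f \<le> \<alpha> * Dir \<Omega> \<pi> Q f)"

text \<open>Walks in the graph induced by \<open>Q\<close> (edges: distinct \<open>x,y\<close> with \<open>Q x y \<noteq> 0\<close>);
  a walk of length \<open>n\<close> is a vertex list of length \<open>n+1\<close>.\<close>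
definition graph_walk :: "nat set \<Rightarrow> (nat \<Rightarrow> nat \<Rightarrow> real) \<Rightarrow> nat list \<Rightarrow> bool" where
  "graph_walk \<Omega> Q xs \<longleftrightarrow> xs \<noteq> [] \<and> set xs \<subseteq> \<Omega> \<and>
     (\<forall>i. Suc i < length xs \<longrightarrow> xs ! i \<noteq> xs ! Suc i \<and> Q (xs ! i) (xs ! Suc i) \<noteq> 0)"

definition graph_dist :: "nat set \<Rightarrow> (nat \<Rightarrow> nat \<Rightarrow> real) \<Rightarrow> nat \<Rightarrow> nat \<Rightarrow> enat" where
  "graph_dist \<Omega> Q x y = Inf {enat (length xs - 1) | xs.
      graph_walk \<Omega> Q xs \<and> hd xs = x \<and> last xs = y}"

definition regular :: "nat set \<Rightarrow> (nat \<Rightarrow> nat \<Rightarrow> real) \<Rightarrow> real \<Rightarrow> (nat \<Rightarrow> real) \<Rightarrow> bool" where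
  "regular \<Omega> Q r f \<longleftrightarrow> (\<forall>x\<in>\<Omega>. f x > 0) \<and>
     (\<forall>x\<in>\<Omega>. \<forall>y\<in>\<Omega>. graph_dist \<Omega> Q x y \<noteq> \<infinity> \<longrightarrow>
        f x / f y \<le> r ^ the_enat (graph_dist \<Omega> Q x y))"

text \<open>The \<open>r\<close>-regularized MLSI constant (smallest constant); \<open>\<infinity>\<close> if none exists.\<close>
definition alpha_reg :: "nat set \<Rightarrow> (nat \<Rightarrow> real) \<Rightarrow> (nat \<Rightarrow> nat \<Rightarrow> real) \<Rightarrow> real \<Rightarrow> ennreal" where
  "alpha_reg \<Omega> \<pi> Q r = Inf {ennreal \<alpha> | \<alpha>. \<alpha> \<ge> 0 \<and>
     (\<forall>f. regular \<Omega> Q r f \<longrightarrow> Ent \<Omega> \<pi> f \<le> \<alpha> * Dir \<Omega> \<pi> Q f)}"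

definition paths :: "nat set \<Rightarrow> (nat \<Rightarrow> nat \<Rightarrow> real) \<Rightarrow> nat \<Rightarrow> nat \<Rightarrow> nat list set" where
  "paths \<Omega> Q x y = {P. length P \<ge> 2 \<and> set P \<subseteq> \<Omega> \<and> hd P = x \<and> last P = y \<and>
      (\<forall>i. Suc i < length P \<longrightarrow> Q (P ! i) (P ! Suc i) > 0)}"

definition Gamma :: "nat set \<Rightarrow> (nat \<Rightarrow> nat \<Rightarrow> real) \<Rightarrow> (nat \<Rightarrow> nat \<Rightarrow> real) \<Rightarrow> nat list set" where
  "Gamma \<Omega> Q Qt = (\<Union>x\<in>\<Omega>. \<Union>y\<in>\<Omega>. if Qt x y > 0 then paths \<Omega> Q x y else {})"

definition is_flow :: "nat set \<Rightarrow> (nat \<Rightarrow> nat \<Rightarrow> real) \<Rightarrow> (nat \<Rightarrow> real) \<Rightarrow> (nat \<Rightarrow> nat \<Rightarrow> real)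
     \<Rightarrow> (nat list \<Rightarrow> real) \<Rightarrow> bool" where
  "is_flow \<Omega> Q \<pi>t Qt W \<longleftrightarrow>
     (\<forall>P\<in>Gamma \<Omega> Q Qt. 0 \<le> W P \<and> W P \<le> 1) \<and>
     (\<forall>x\<in>\<Omega>. \<forall>y\<in>\<Omega>. Qt x y > 0 \<longrightarrow> (W has_sum (\<pi>t x * Qt x y)) (paths \<Omega> Q x y))"

definition edge_in :: "nat \<Rightarrow> nat \<Rightarrow> nat list \<Rightarrow> bool" where
  "edge_in x y P \<longleftrightarrow> (\<exists>i. Suc i < length P \<and> P ! i = x \<and> P ! Suc i = y)"

text \<open>The congestion \<open>A(W,r)\<close>, computed in \<open>ennreal\<close> (nonnegative, possibly infinite sums).\<close>
definition congestion :: "nat set \<Rightarrow> (nat \<Rightarrow> real) \<Rightarrow> (nat \<Rightarrow> nat \<Rightarrow> real) \<Rightarrow> (nat \<Rightarrow> nat \<Rightarrow> real)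
     \<Rightarrow> (nat list \<Rightarrow> real) \<Rightarrow> real \<Rightarrow> ennreal" where
  "congestion \<Omega> \<pi> Q Qt W r = (SUP e \<in> {(x,y). x \<in> \<Omega> \<and> y \<in> \<Omega> \<and> x \<noteq> y \<and> Q x y > 0}.
      ennreal (1 / (\<pi> (fst e) * Q (fst e) (snd e))) *
      (\<Sum>\<^sub>\<infinity>P\<in>{P\<in>Gamma \<Omega> Q Qt. edge_in (fst e) (snd e) P}.
          ennreal (W P * (1 + (real (length P - 1) - 1)^2 * ln r))))"

end

theory Submission
  imports Defs
begin

text \<open>Write \<open>\<Phi>(u, v) = (u - v) ln (u / v)\<close>, so that \<open>2 Dir f\<close> is the \<open>\<pi> Q\<close>-weighted sum of
  \<open>\<Phi>(f x, f y)\<close> over edges. Since \<open>\<pi> \<le> a \<pi>t\<close>, the variational formula for the entropy gives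
  \<open>Ent\<^sub>\<pi> f \<le> a Ent\<^sub>\<pi>\<^sub>t f\<close>, so it suffices to bound the \<open>Qt\<close>-Dirichlet form by the \<open>Q\<close>-Dirichlet
  form for regular \<open>f\<close>. The flow writes the former as a sum over paths \<open>P\<close> of
  \<open>W(P) \<Phi>(f (hd P), f (last P))\<close>. Since \<open>2(\<surd>u - \<surd>v)\<^sup>2 \<le> \<Phi>(u, v) \<le> (\<surd>u - \<surd>v)\<^sup>2 (4 + |ln u - ln v|)\<close>,
  Cauchy-Schwarz along a path with \<open>k\<close> steps, together with the bound \<open>k ln r\<close> on the log
  difference of its endpoints coming from regularity, gives
  \<open>\<Phi>(f (hd P), f (last P)) \<le> 10 (1 + (k - 1)\<^sup>2 ln r) \<Sum>\<^sub>e\<^sub>\<in>\<^sub>P \<Phi>(e)\<close>. Exchanging the sums over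
  paths and edges produces the congestion, and the theorem holds with \<open>C = 10\<close>.\<close>

section \<open>Elementary inequalities for \<open>(u - v) ln (u / v)\<close>\<close>

definition edge_energy :: "real \<Rightarrow> real \<Rightarrow> real" where
  "edge_energy u v = (u - v) * ln (u / v)"

lemma edge_energy_commute:
  assumes "u > 0" "v > 0"
  shows "edge_energy u v = edge_energy v u"
  using assms by (simp add: edge_energy_def ln_div algebra_simps)

lemma edge_energy_nonneg:
  assumes "u > 0" "v > 0"
  shows "0 \<le> edge_energy u v"
proof (cases "u \<ge> v")
  case True
  then show ?thesis using assms by (simp add: edge_energy_def)
next
  case False
  then have "ln (u / v) \<le> 0" using assms by simp
  then show ?thesis using False by (simp add: edge_energy_def mult_nonpos_nonpos)
qed

text \<open>In the square-root variables \<open>u = a\<^sup>2\<close>, \<open>v = b\<^sup>2\<close>, both bounds come from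
  \<open>(a - b)/a \<le> ln (a/b) \<le> (a - b)/b\<close>.\<close>
lemma edge_energy_sqrt_bounds_of_le:
  assumes "v > 0" "u \<ge> v"
  shows "2 * (sqrt u - sqrt v)\<^sup>2 \<le> edge_energy u v"
    and "edge_energy u v \<le> (sqrt u - sqrt v)\<^sup>2 * (4 + \<bar>ln u - ln v\<bar>)"
proof -
  define a b where "a = sqrt u" and "b = sqrt v"
  have b: "b > 0" "a \<ge> b" using assms by (auto simp: a_def b_def)
  have uv: "u = a\<^sup>2" "v = b\<^sup>2" using assms by (auto simp: a_def b_def)
  have "u / v = (a / b)\<^sup>2" by (simp add: uv power_divide)
  then have "ln (u / v) = 2 * ln (a / b)"
    using b by (simp add: ln_realpow)
  then have energy: "edge_energy u v = (a - b) * (a + b) * (2 * ln (a / b))"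
    unfolding edge_energy_def uv by (simp add: power2_eq_square algebra_simps)
  have abs_ln: "\<bar>ln u - ln v\<bar> = 2 * ln (a / b)"
    using \<open>ln (u / v) = 2 * ln (a / b)\<close> assms b by (simp add: ln_div)
  have lower: "(a - b) / a \<le> ln (a / b)"
    using ln_le_minus_one[of "b / a"] b by (simp add: ln_div field_simps)
  have upper: "b * ln (a / b) \<le> a - b"
    using ln_le_minus_one[of "a / b"] b by (simp add: field_simps)
  have "2 * (a - b)\<^sup>2 \<le> 2 * (a - b)\<^sup>2 * ((a + b) / a)"
    using b by (simp add: field_simps)
  also have "\<dots> = (a - b) * (a + b) * (2 * ((a - b) / a))"
    using b by (simp add: field_simps power2_eq_square)
  also have "\<dots> \<le> (a - b) * (a + b) * (2 * ln (a / b))"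
    using b lower by (intro mult_left_mono) auto
  finally show "2 * (sqrt u - sqrt v)\<^sup>2 \<le> edge_energy u v"
    unfolding energy by (simp add: a_def b_def)
  have "(a + b) * ln (a / b) \<le> (a - b) * (2 + ln (a / b))"
    using upper by (simp add: algebra_simps)
  then have "2 * (a - b) * ((a + b) * ln (a / b)) \<le> 2 * (a - b) * ((a - b) * (2 + ln (a / b)))"
    using b by (intro mult_left_mono) auto
  then show "edge_energy u v \<le> (sqrt u - sqrt v)\<^sup>2 * (4 + \<bar>ln u - ln v\<bar>)"
    unfolding energy abs_ln by (simp add: a_def [symmetric] b_def [symmetric] power2_eq_square algebra_simps)
qed

lemma edge_energy_ge_sqrt:
  assumes "u > 0" "v > 0"
  shows "2 * (sqrt u - sqrt v)\<^sup>2 \<le> edge_energy u v"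
  using edge_energy_sqrt_bounds_of_le(1)[of v u] edge_energy_sqrt_bounds_of_le(1)[of u v]
    edge_energy_commute[OF assms] assms
  by (cases "u \<ge> v") (auto simp: power2_commute)

lemma edge_energy_le_sqrt:
  assumes "u > 0" "v > 0"
  shows "edge_energy u v \<le> (sqrt u - sqrt v)\<^sup>2 * (4 + \<bar>ln u - ln v\<bar>)"
  using edge_energy_sqrt_bounds_of_le(2)[of v u] edge_energy_sqrt_bounds_of_le(2)[of u v]
    edge_energy_commute[OF assms] assms
  by (cases "u \<ge> v") (auto simp: power2_commute abs_minus_commute)

section \<open>Edges of a path\<close>

definition path_edges :: "nat list \<Rightarrow> (nat \<times> nat) set" where
  "path_edges P = {(u, v). edge_in u v P}"

lemma mem_path_edges_iff [simp]: "(u, v) \<in> path_edges P \<longleftrightarrow> edge_in u v P"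
  by (simp add: path_edges_def)

lemma path_edges_eq_image: "path_edges P = (\<lambda>i. (P ! i, P ! Suc i)) ` {..<length P - 1}"
  unfolding path_edges_def edge_in_def by (force simp: image_def)

lemma finite_path_edges [simp]: "finite (path_edges P)"
  by (simp add: path_edges_eq_image)

lemma card_path_edges_le: "card (path_edges P) \<le> length P - 1"
  unfolding path_edges_eq_image by (rule order.trans[OF card_image_le]) auto

lemma path_edges_subset_set: "(u, v) \<in> path_edges P \<Longrightarrow> u \<in> set P \<and> v \<in> set P"
  by (auto simp: path_edges_def edge_in_def)

lemma path_edges_single [simp]: "path_edges [x] = {}"
  by (simp add: path_edges_eq_image)

lemma path_edges_Cons_Cons: "path_edges (x # y # R) = insert (x, y) (path_edges (y # R))"
  unfolding path_edges_eq_image by (auto simp: lessThan_Suc_eq_insert_0 image_image)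

lemma path_edges_append_subset: "path_edges S \<subseteq> path_edges (R @ S)"
  unfolding path_edges_def edge_in_def
  by (force intro: exI[of _ "length R + i" for i] simp: nth_append)

text \<open>An edge may occur several times in \<open>P\<close> but is counted once on the right;
  this is why closed loops are cut out of \<open>P\<close> in the induction.\<close>
lemma abs_diff_hd_last_le_sum_path_edges:
  fixes g :: "nat \<Rightarrow> real"
  assumes "P \<noteq> []"
  shows "\<bar>g (hd P) - g (last P)\<bar> \<le> (\<Sum>(u, v)\<in>path_edges P. \<bar>g u - g v\<bar>)"
  using assms
proof (induction "length P" arbitrary: P rule: less_induct)
  case less
  then obtain x P' where P: "P = x # P'" by (cases P) auto
  show ?case
  proof (cases "P' = []")
    case True
    then show ?thesis using P by simp
  next
    case False
    show ?thesis
    proof (cases "x \<in> set P'")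
      case True
      then obtain R S where P': "P' = R @ x # S" by (meson split_list)
      have "path_edges (x # S) \<subseteq> path_edges P'"
        unfolding P' by (rule path_edges_append_subset)
      also have "\<dots> \<subseteq> path_edges P"
        using path_edges_append_subset[of P' "[x]"] P by simp
      finally have "(\<Sum>(u, v)\<in>path_edges (x # S). \<bar>g u - g v\<bar>) \<le> (\<Sum>(u, v)\<in>path_edges P. \<bar>g u - g v\<bar>)"
        by (intro sum_mono2) auto
      moreover have "\<bar>g (hd (x # S)) - g (last (x # S))\<bar> \<le> (\<Sum>(u, v)\<in>path_edges (x # S). \<bar>g u - g v\<bar>)"
        using P P' by (intro less) auto
      ultimately show ?thesis using P P' by simp
    next
      case False
      then obtain y R where P': "P' = y # R" "x \<noteq> y" using \<open>P' \<noteq> []\<close> by (cases P') auto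
      have "(x, y) \<notin> path_edges P'" using False path_edges_subset_set by blast
      then have "(\<Sum>(u, v)\<in>path_edges P. \<bar>g u - g v\<bar>) = \<bar>g x - g y\<bar> + (\<Sum>(u, v)\<in>path_edges P'. \<bar>g u - g v\<bar>)"
        using P P' by (simp add: path_edges_Cons_Cons)
      moreover have "\<bar>g (hd P') - g (last P')\<bar> \<le> (\<Sum>(u, v)\<in>path_edges P'. \<bar>g u - g v\<bar>)"
        using P P' by (intro less) auto
      ultimately show ?thesis using P P' by simp
    qed
  qed
qed

lemma sqrt_diff_sq_le_path_energy:
  assumes pos: "\<forall>x\<in>set P. f x > 0" and "P \<noteq> []"
  shows "(sqrt (f (hd P)) - sqrt (f (last P)))\<^sup>2
    \<le> card (path_edges P) / 2 * (\<Sum>(u, v)\<in>path_edges P. edge_energy (f u) (f v))"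
proof -
  let ?E = "path_edges P"
  have "\<bar>sqrt (f (hd P)) - sqrt (f (last P))\<bar> \<le> (\<Sum>(u, v)\<in>?E. \<bar>sqrt (f u) - sqrt (f v)\<bar>)"
    using assms(2) by (rule abs_diff_hd_last_le_sum_path_edges)
  then have "(sqrt (f (hd P)) - sqrt (f (last P)))\<^sup>2 \<le> (\<Sum>(u, v)\<in>?E. \<bar>sqrt (f u) - sqrt (f v)\<bar>)\<^sup>2"
    by (metis abs_ge_zero power2_abs power_mono)
  also have "\<dots> \<le> card ?E * (\<Sum>(u, v)\<in>?E. (sqrt (f u) - sqrt (f v))\<^sup>2)"
    using Cauchy_Schwarz_ineq_sum[of "\<lambda>_. 1" "\<lambda>(u, v). \<bar>sqrt (f u) - sqrt (f v)\<bar>" ?E]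
    by (simp add: case_prod_unfold)
  also have "\<dots> \<le> card ?E * (\<Sum>(u, v)\<in>?E. edge_energy (f u) (f v) / 2)"
  proof (intro mult_left_mono sum_mono)
    fix e assume "e \<in> ?E"
    then obtain u v where "e = (u, v)" "u \<in> set P" "v \<in> set P"
      using path_edges_subset_set by (cases e) blast
    then show "(case e of (u, v) \<Rightarrow> (sqrt (f u) - sqrt (f v))\<^sup>2) \<le> (case e of (u, v) \<Rightarrow> edge_energy (f u) (f v) / 2)"
      using edge_energy_ge_sqrt[of "f u" "f v"] pos by simp
  qed simp
  finally show ?thesis by (simp add: case_prod_unfold sum_divide_distrib[symmetric])
qed

lemma path_weight_arith:
  fixes k L :: real
  assumes "k \<ge> 2" "L \<ge> 1/2"
  shows "k / 2 * (4 + k * L) \<le> 10 * (1 + (k - 1)\<^sup>2 * L)"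
proof -
  have "k\<^sup>2 \<le> 4 * (k - 1)\<^sup>2"
    using mult_nonneg_nonneg[of "3 * k - 2" "k - 2"] assms by (simp add: power2_eq_square algebra_simps)
  then have "k\<^sup>2 * L \<le> 4 * ((k - 1)\<^sup>2 * L)"
    using assms mult_right_mono[of "k\<^sup>2" "4 * (k - 1)\<^sup>2" L] by simp
  moreover have "k - 1 \<le> (k - 1)\<^sup>2" using assms by (simp add: power2_eq_square)
  moreover have "(k - 1)\<^sup>2 / 2 \<le> (k - 1)\<^sup>2 * L" using assms mult_left_mono[of "1/2" L "(k - 1)\<^sup>2"] by simp
  moreover have "(k - 1)\<^sup>2 * L \<ge> 0" using assms by simp
  ultimately have "2 * k + k\<^sup>2 * L / 2 \<le> 10 + 10 * ((k - 1)\<^sup>2 * L)" by linarith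
  then show ?thesis by (simp add: power2_eq_square algebra_simps)
qed

lemma edge_energy_hd_last_le_path:
  assumes pos: "\<forall>x\<in>set P. f x > 0" and len: "length P \<ge> 2" and L: "L \<ge> 1/2"
    and log_lipschitz: "\<forall>(u, v)\<in>path_edges P. \<bar>ln (f u) - ln (f v)\<bar> \<le> L"
  shows "edge_energy (f (hd P)) (f (last P))
    \<le> 10 * (1 + (real (length P - 1) - 1)\<^sup>2 * L) * (\<Sum>(u, v)\<in>path_edges P. edge_energy (f u) (f v))"
    (is "?lhs \<le> 10 * ?w * ?S")
proof -
  have "P \<noteq> []" using len by auto
  have S: "?S \<ge> 0"
    using pos path_edges_subset_set by (intro sum_nonneg) (auto intro: edge_energy_nonneg)
  show ?thesis
  proof (cases "length P = 2")
    case True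
    then obtain x y where "P = [x, y]" by (auto simp: length_Suc_conv numeral_2_eq_2)
    then show ?thesis using S by (simp add: path_edges_Cons_Cons)
  next
    case False
    define k where "k = real (length P - 1)"
    have k: "k \<ge> 2" "card (path_edges P) \<le> k"
      using False len card_path_edges_le[of P] unfolding k_def by auto
    have "\<bar>ln (f (hd P)) - ln (f (last P))\<bar> \<le> (\<Sum>(u, v)\<in>path_edges P. \<bar>ln (f u) - ln (f v)\<bar>)"
      using \<open>P \<noteq> []\<close> by (rule abs_diff_hd_last_le_sum_path_edges)
    also have "\<dots> \<le> card (path_edges P) * L"
      using sum_mono[of "path_edges P" "\<lambda>(u, v). \<bar>ln (f u) - ln (f v)\<bar>" "\<lambda>_. L"] log_lipschitz
      by (simp add: case_prod_unfold)
    also have "\<dots> \<le> k * L" using k L by (intro mult_right_mono) auto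
    finally have ln_hd_last: "\<bar>ln (f (hd P)) - ln (f (last P))\<bar> \<le> k * L" .
    have "(sqrt (f (hd P)) - sqrt (f (last P)))\<^sup>2 \<le> card (path_edges P) / 2 * ?S"
      using pos \<open>P \<noteq> []\<close> by (rule sqrt_diff_sq_le_path_energy)
    also have "\<dots> \<le> k / 2 * ?S" using k S by (intro mult_right_mono) auto
    finally have sqrt_hd_last: "(sqrt (f (hd P)) - sqrt (f (last P)))\<^sup>2 \<le> k / 2 * ?S" .
    have "?lhs \<le> (sqrt (f (hd P)) - sqrt (f (last P)))\<^sup>2 * (4 + \<bar>ln (f (hd P)) - ln (f (last P))\<bar>)"
      using pos \<open>P \<noteq> []\<close> by (intro edge_energy_le_sqrt) auto
    also have "\<dots> \<le> k / 2 * ?S * (4 + k * L)"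
      using sqrt_hd_last ln_hd_last k S by (intro mult_mono) auto
    also have "\<dots> = k / 2 * (4 + k * L) * ?S" by simp
    also have "\<dots> \<le> 10 * ?w * ?S"
      using path_weight_arith[OF k(1) L] S unfolding k_def by (intro mult_right_mono) auto
    finally show ?thesis .
  qed
qed

section \<open>Generators, regular functions and flows\<close>

definition gen_edges :: "nat set \<Rightarrow> (nat \<Rightarrow> nat \<Rightarrow> real) \<Rightarrow> (nat \<times> nat) set" where
  "gen_edges \<Omega> Q = {(x, y). x \<in> \<Omega> \<and> y \<in> \<Omega> \<and> x \<noteq> y \<and> Q x y > 0}"

lemma finite_gen_edges [simp]: "finite \<Omega> \<Longrightarrow> finite (gen_edges \<Omega> Q)"
  by (rule finite_subset[of _ "\<Omega> \<times> \<Omega>"]) (auto simp: gen_edges_def)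

lemma markov_generator_diag_nonpos:
  assumes "markov_generator \<Omega> Q" "finite \<Omega>" "x \<in> \<Omega>"
  shows "Q x x \<le> 0"
proof -
  have "Q x x + (\<Sum>y\<in>\<Omega> - {x}. Q x y) = 0"
    using assms by (simp add: markov_generator_def sum.remove)
  moreover have "(\<Sum>y\<in>\<Omega> - {x}. Q x y) \<ge> 0"
    using assms by (intro sum_nonneg) (auto simp: markov_generator_def)
  ultimately show ?thesis by linarith
qed

lemma gen_edges_iff:
  assumes "markov_generator \<Omega> Q" "finite \<Omega>"
  shows "(x, y) \<in> gen_edges \<Omega> Q \<longleftrightarrow> x \<in> \<Omega> \<and> y \<in> \<Omega> \<and> Q x y > 0"
  using markov_generator_diag_nonpos[OF assms] by (force simp: gen_edges_def)

lemma reversible_gen_pos_sym: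
  assumes "reversible_gen \<Omega> \<pi> Q" "x \<in> \<Omega>" "y \<in> \<Omega>" "Q x y > 0"
  shows "Q y x > 0"
proof -
  have "\<pi> x > 0" "\<pi> y > 0" "\<pi> x * Q x y = \<pi> y * Q y x"
    using assms by (auto simp: reversible_gen_def)
  then show ?thesis using assms(4) by (metis mult_pos_pos zero_less_mult_pos)
qed

lemma graph_dist_le_one:
  assumes "x \<in> \<Omega>" "y \<in> \<Omega>" "x \<noteq> y" "Q x y \<noteq> 0"
  shows "graph_dist \<Omega> Q x y \<le> 1"
proof -
  have "graph_walk \<Omega> Q [x, y]" using assms by (auto simp: graph_walk_def less_Suc_eq)
  then show ?thesis unfolding graph_dist_def one_enat_def
    by (intro Inf_lower CollectI exI[of _ "[x, y]"]) auto
qed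

lemma regular_ratio_le:
  assumes "regular \<Omega> Q r f" "r \<ge> 1" "x \<in> \<Omega>" "y \<in> \<Omega>" "x \<noteq> y" "Q x y \<noteq> 0"
  shows "f x / f y \<le> r"
proof -
  obtain n where n: "graph_dist \<Omega> Q x y = enat n" "n \<le> 1"
    using graph_dist_le_one[of x \<Omega> y Q] assms(3-6) by (cases "graph_dist \<Omega> Q x y") (auto simp: one_enat_def)
  have "f x / f y \<le> r ^ n" using assms(1,3,4) n(1) by (fastforce simp: regular_def)
  also have "\<dots> \<le> r" using n(2) assms(2) by (cases n) auto
  finally show ?thesis .
qed

lemma regular_abs_ln_diff_le:
  assumes "reversible_gen \<Omega> \<pi> Q" "finite \<Omega>" "regular \<Omega> Q r f" "r \<ge> 1"
    and "x \<in> \<Omega>" "y \<in> \<Omega>" "Q x y > 0"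
  shows "\<bar>ln (f x) - ln (f y)\<bar> \<le> ln r"
proof -
  have "x \<noteq> y"
    using assms markov_generator_diag_nonpos[of \<Omega> Q x] by (auto simp: reversible_gen_def)
  have pos: "f x > 0" "f y > 0" using assms(3,5,6) by (auto simp: regular_def)
  have "f x / f y \<le> r" "f y / f x \<le> r"
    using regular_ratio_le[OF assms(3,4)] reversible_gen_pos_sym[OF assms(1,5-7)] assms(5-7) \<open>x \<noteq> y\<close>
    by auto
  then have "ln (f x / f y) \<le> ln r" "ln (f y / f x) \<le> ln r"
    using pos assms(4) by simp_all
  then show ?thesis using pos by (simp add: ln_div)
qed

lemma paths_hd_last:
  assumes "P \<in> paths \<Omega> Q x y"
  shows "hd P = x" "last P = y"
  using assms by (auto simp: paths_def)

lemma paths_path_edges: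
  assumes "P \<in> paths \<Omega> Q x y" "(u, v) \<in> path_edges P"
  shows "u \<in> \<Omega> \<and> v \<in> \<Omega> \<and> Q u v > 0"
proof -
  obtain i where i: "Suc i < length P" "u = P ! i" "v = P ! Suc i"
    using assms(2) by (auto simp: path_edges_def edge_in_def)
  then have "u \<in> set P" "v \<in> set P" by auto
  then show ?thesis using assms(1) i by (auto simp: paths_def)
qed

lemma Gamma_eq_UN_paths:
  assumes "markov_generator \<Omega> Qt" "finite \<Omega>"
  shows "Gamma \<Omega> Q Qt = (\<Union>(x, y)\<in>gen_edges \<Omega> Qt. paths \<Omega> Q x y)"
  unfolding Gamma_def using gen_edges_iff[OF assms] by (auto split: if_splits)

lemma Gamma_path_edges_subset:
  assumes "markov_generator \<Omega> Q" "finite \<Omega>" "P \<in> Gamma \<Omega> Q Qt"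
  shows "path_edges P \<subseteq> gen_edges \<Omega> Q"
  using assms paths_path_edges gen_edges_iff[OF assms(1,2)]
  unfolding Gamma_def by (fastforce split: if_splits)

lemma infsum_ennreal_of_has_sum:
  fixes g :: "'a \<Rightarrow> real"
  assumes "(g has_sum s) A" "\<And>x. x \<in> A \<Longrightarrow> g x \<ge> 0"
  shows "infsum (\<lambda>x. ennreal (g x)) A = ennreal s"
proof -
  have "infsum (ennreal \<circ> g) A = ennreal (infsum g A)"
    using assms by (intro infsum_comm_additive_general)
      (auto simp: summable_on_def isCont_def intro!: sum_ennreal)
  then show ?thesis using infsumI[OF assms(1)] by (simp add: o_def)
qed

lemma infsum_cmult_right_ennreal:
  fixes g :: "'a \<Rightarrow> ennreal"
  shows "infsum (\<lambda>x. c * g x) A = c * infsum g A"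
proof -
  have "infsum (\<lambda>x. c * g x) A = (SUP F\<in>{F. finite F \<and> F \<subseteq> A}. c * sum g F)"
    by (simp add: nonneg_infsum_complete sum_distrib_left)
  also have "\<dots> = c * infsum g A"
    by (simp add: nonneg_infsum_complete SUP_mult_left_ennreal)
  finally show ?thesis .
qed

lemma infsum_sum_ennreal:
  fixes g :: "'i \<Rightarrow> 'a \<Rightarrow> ennreal"
  assumes "finite I"
  shows "infsum (\<lambda>x. \<Sum>i\<in>I. g i x) A = (\<Sum>i\<in>I. infsum (g i) A)"
  using assms
proof (induction I rule: finite_induct)
  case (insert i I)
  have "infsum (\<lambda>x. g i x + (\<Sum>j\<in>I. g j x)) A = infsum (g i) A + infsum (\<lambda>x. \<Sum>j\<in>I. g j x) A"
    by (rule infsum_add; rule nonneg_summable_on_complete; simp)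
  then show ?case using insert by simp
qed simp

lemma infsum_sum_if_ennreal:
  fixes c :: "'e \<Rightarrow> ennreal" and \<rho> :: "'a \<Rightarrow> ennreal"
  assumes "finite E"
  shows "(\<Sum>\<^sub>\<infinity>x\<in>A. \<Sum>e\<in>E. c e * (if R e x then \<rho> x else 0))
    = (\<Sum>e\<in>E. c e * (\<Sum>\<^sub>\<infinity>x\<in>{x \<in> A. R e x}. \<rho> x))"
proof -
  have "(\<Sum>\<^sub>\<infinity>x\<in>A. if R e x then \<rho> x else 0) = (\<Sum>\<^sub>\<infinity>x\<in>{x \<in> A. R e x}. \<rho> x)" for e
    by (rule infsum_cong_neutral) auto
  then show ?thesis
    using assms by (simp add: infsum_sum_ennreal infsum_cmult_right_ennreal)
qed

section \<open>Entropy comparison\<close>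

text \<open>The Bregman divergence of \<open>t \<mapsto> t ln t\<close>; the entropy is its minimal \<open>\<pi>\<close>-average
  over constants \<open>c\<close>, attained at the mean.\<close>
definition bregman :: "real \<Rightarrow> real \<Rightarrow> real" where
  "bregman u c = u * (ln u - ln c) - u + c"

lemma bregman_nonneg:
  assumes "u > 0" "c > 0"
  shows "bregman u c \<ge> 0"
proof -
  have "ln (c / u) \<le> c / u - 1" using assms by (intro ln_le_minus_one) simp
  then have "u * (ln c - ln u) \<le> u * (c / u - 1)"
    using assms by (intro mult_left_mono) (auto simp: ln_div)
  then show ?thesis using assms by (simp add: bregman_def algebra_simps)
qed

lemma sum_bregman_eq_Ent:
  assumes "(\<Sum>x\<in>\<Omega>. \<pi> x) = 1"
  shows "(\<Sum>x\<in>\<Omega>. \<pi> x * bregman (f x) c) = Ent \<Omega> \<pi> f + bregman (\<Sum>x\<in>\<Omega>. \<pi> x * f x) c"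
proof -
  define m where "m = (\<Sum>x\<in>\<Omega>. \<pi> x * f x)"
  have "(\<Sum>x\<in>\<Omega>. \<pi> x * bregman (f x) c)
      = (\<Sum>x\<in>\<Omega>. \<pi> x * (f x * (ln (f x) - ln m)) + (\<pi> x * f x * (ln m - ln c) - \<pi> x * f x + \<pi> x * c))"
    by (intro sum.cong) (auto simp: bregman_def algebra_simps)
  also have "\<dots> = Ent \<Omega> \<pi> f + (m * (ln m - ln c) - m + (\<Sum>x\<in>\<Omega>. \<pi> x) * c)"
    by (simp add: Ent_def m_def sum.distrib sum_subtractf sum_distrib_right)
  finally show ?thesis using assms by (simp add: bregman_def m_def)
qed

lemma Ent_le_mult_Ent:
  assumes "finite \<Omega>"
    and \<pi>: "\<forall>x\<in>\<Omega>. \<pi> x > 0" "(\<Sum>x\<in>\<Omega>. \<pi> x) = 1"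
    and \<pi>t: "\<forall>x\<in>\<Omega>. \<pi>t x > 0" "(\<Sum>x\<in>\<Omega>. \<pi>t x) = 1"
    and dom: "\<forall>x\<in>\<Omega>. \<pi> x \<le> a * \<pi>t x" and f: "\<forall>x\<in>\<Omega>. f x > 0"
  shows "Ent \<Omega> \<pi> f \<le> a * Ent \<Omega> \<pi>t f"
proof -
  have "\<Omega> \<noteq> {}" using \<pi>(2) by auto
  define m mt where "m = (\<Sum>x\<in>\<Omega>. \<pi> x * f x)" and "mt = (\<Sum>x\<in>\<Omega>. \<pi>t x * f x)"
  have "m > 0" "mt > 0"
    unfolding m_def mt_def using assms(1) \<open>\<Omega> \<noteq> {}\<close> \<pi> \<pi>t f by (auto intro!: sum_pos)
  have "Ent \<Omega> \<pi> f \<le> (\<Sum>x\<in>\<Omega>. \<pi> x * bregman (f x) mt)"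
    using sum_bregman_eq_Ent[OF \<pi>(2), of f mt] bregman_nonneg[OF \<open>m > 0\<close> \<open>mt > 0\<close>]
    unfolding m_def by linarith
  also have "\<dots> \<le> (\<Sum>x\<in>\<Omega>. a * \<pi>t x * bregman (f x) mt)"
    using dom f bregman_nonneg \<open>mt > 0\<close> by (intro sum_mono mult_right_mono) auto
  also have "\<dots> = a * (\<Sum>x\<in>\<Omega>. \<pi>t x * bregman (f x) mt)"
    by (simp add: sum_distrib_left mult.assoc)
  also have "(\<Sum>x\<in>\<Omega>. \<pi>t x * bregman (f x) mt) = Ent \<Omega> \<pi>t f"
    using sum_bregman_eq_Ent[OF \<pi>t(2), of f mt] by (simp add: mt_def bregman_def)
  finally show ?thesis .
qed

section \<open>Dirichlet form comparison\<close>

definition path_weight :: "real \<Rightarrow> nat list \<Rightarrow> real" where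
  "path_weight r P = 1 + (real (length P - 1) - 1)\<^sup>2 * ln r"

lemma Dir_eq_sum_gen_edges:
  assumes "markov_generator \<Omega> Q" "finite \<Omega>"
  shows "Dir \<Omega> \<pi> Q f = 1/2 * (\<Sum>(x, y)\<in>gen_edges \<Omega> Q. \<pi> x * Q x y * edge_energy (f x) (f y))"
proof -
  have "(\<Sum>x\<in>\<Omega>. \<Sum>y\<in>\<Omega>. \<pi> x * Q x y * edge_energy (f x) (f y))
      = (\<Sum>(x, y)\<in>\<Omega> \<times> \<Omega>. \<pi> x * Q x y * edge_energy (f x) (f y))"
    by (simp add: sum.cartesian_product)
  also have "\<dots> = (\<Sum>(x, y)\<in>gen_edges \<Omega> Q. \<pi> x * Q x y * edge_energy (f x) (f y))"
  proof (rule sum.mono_neutral_right)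
    show "\<forall>e\<in>\<Omega> \<times> \<Omega> - gen_edges \<Omega> Q. (case e of (x, y) \<Rightarrow> \<pi> x * Q x y * edge_energy (f x) (f y)) = 0"
      using assms(1) by (force simp: gen_edges_def edge_energy_def markov_generator_def)
  qed (use assms(2) in \<open>auto simp: gen_edges_def\<close>)
  finally show ?thesis by (simp add: Dir_def edge_energy_def mult.assoc)
qed

lemma Dir_nonneg:
  assumes "finite \<Omega>" "reversible_gen \<Omega> \<pi> Q" "\<forall>x\<in>\<Omega>. f x > 0"
  shows "Dir \<Omega> \<pi> Q f \<ge> 0"
proof -
  have "markov_generator \<Omega> Q" "\<forall>x\<in>\<Omega>. \<pi> x > 0" using assms(2) by (auto simp: reversible_gen_def)
  then show ?thesis
    using assms(1,3) by (auto simp: Dir_eq_sum_gen_edges gen_edges_def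
        intro!: sum_nonneg mult_nonneg_nonneg edge_energy_nonneg)
qed

lemma ennreal_two_Dir_eq_sum:
  assumes "finite \<Omega>" "reversible_gen \<Omega> \<pi> Q" "\<forall>x\<in>\<Omega>. f x > 0"
  shows "ennreal (2 * Dir \<Omega> \<pi> Q f)
    = (\<Sum>(x, y)\<in>gen_edges \<Omega> Q. ennreal (\<pi> x * Q x y) * ennreal (edge_energy (f x) (f y)))"
proof -
  have gen: "markov_generator \<Omega> Q" and \<pi>: "\<forall>x\<in>\<Omega>. \<pi> x > 0"
    using assms(2) by (auto simp: reversible_gen_def)
  have nonneg: "\<pi> x * Q x y \<ge> 0" "edge_energy (f x) (f y) \<ge> 0" if "(x, y) \<in> gen_edges \<Omega> Q" for x y
    using that \<pi> assms(3) by (auto simp: gen_edges_def intro!: edge_energy_nonneg)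
  have "ennreal (2 * Dir \<Omega> \<pi> Q f)
      = ennreal (\<Sum>(x, y)\<in>gen_edges \<Omega> Q. \<pi> x * Q x y * edge_energy (f x) (f y))"
    by (simp add: Dir_eq_sum_gen_edges[OF gen assms(1)])
  also have "\<dots> = (\<Sum>(x, y)\<in>gen_edges \<Omega> Q. ennreal (\<pi> x * Q x y * edge_energy (f x) (f y)))"
    using nonneg unfolding case_prod_unfold by (subst sum_ennreal) (auto intro!: mult_nonneg_nonneg)
  also have "\<dots> = (\<Sum>(x, y)\<in>gen_edges \<Omega> Q. ennreal (\<pi> x * Q x y) * ennreal (edge_energy (f x) (f y)))"
    using nonneg by (intro sum.cong refl) (auto simp: ennreal_mult)
  finally show ?thesis .
qed

lemma flow_edge_energy:
  assumes "is_flow \<Omega> Q \<pi>t Qt W" "x \<in> \<Omega>" "y \<in> \<Omega>" "Qt x y > 0" "edge_energy (f x) (f y) \<ge> 0"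
  shows "ennreal (\<pi>t x * Qt x y) * ennreal (edge_energy (f x) (f y))
    = (\<Sum>\<^sub>\<infinity>P\<in>paths \<Omega> Q x y. ennreal (W P * edge_energy (f (hd P)) (f (last P))))"
proof -
  have "(W has_sum (\<pi>t x * Qt x y)) (paths \<Omega> Q x y)"
    using assms(1-4) by (auto simp: is_flow_def)
  then have "((\<lambda>P. W P * edge_energy (f x) (f y)) has_sum (\<pi>t x * Qt x y * edge_energy (f x) (f y)))
      (paths \<Omega> Q x y)"
    by (rule has_sum_cmult_left)
  moreover have "W P \<ge> 0" if "P \<in> paths \<Omega> Q x y" for P
    using assms(1-4) that by (auto simp: is_flow_def Gamma_def)
  moreover have "ennreal (\<pi>t x * Qt x y) * ennreal (edge_energy (f x) (f y))
      = ennreal (\<pi>t x * Qt x y * edge_energy (f x) (f y))"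
    using assms(5) by (rule ennreal_mult''[symmetric])
  ultimately have "ennreal (\<pi>t x * Qt x y) * ennreal (edge_energy (f x) (f y))
      = (\<Sum>\<^sub>\<infinity>P\<in>paths \<Omega> Q x y. ennreal (W P * edge_energy (f x) (f y)))"
    using assms(5) by (simp add: infsum_ennreal_of_has_sum)
  also have "\<dots> = (\<Sum>\<^sub>\<infinity>P\<in>paths \<Omega> Q x y. ennreal (W P * edge_energy (f (hd P)) (f (last P))))"
    by (intro infsum_cong) (simp add: paths_hd_last)
  finally show ?thesis .
qed

text \<open>The sets \<open>paths \<Omega> Q x y\<close> are pairwise disjoint, since a path determines its endpoints.\<close>
lemma Dir_eq_flow_sum:
  assumes "finite \<Omega>" "reversible_gen \<Omega> \<pi>t Qt" "is_flow \<Omega> Q \<pi>t Qt W" "\<forall>x\<in>\<Omega>. f x > 0"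
  shows "ennreal (2 * Dir \<Omega> \<pi>t Qt f)
    = (\<Sum>\<^sub>\<infinity>P\<in>Gamma \<Omega> Q Qt. ennreal (W P * edge_energy (f (hd P)) (f (last P))))"
proof -
  have gen: "markov_generator \<Omega> Qt" using assms(2) by (simp add: reversible_gen_def)
  let ?E = "gen_edges \<Omega> Qt"
  have "ennreal (2 * Dir \<Omega> \<pi>t Qt f)
      = (\<Sum>(x, y)\<in>?E. ennreal (\<pi>t x * Qt x y) * ennreal (edge_energy (f x) (f y)))"
    using assms(1,2,4) by (rule ennreal_two_Dir_eq_sum)
  also have "\<dots> = (\<Sum>(x, y)\<in>?E. \<Sum>\<^sub>\<infinity>P\<in>paths \<Omega> Q x y. ennreal (W P * edge_energy (f (hd P)) (f (last P))))"
    using assms(4) by (intro sum.cong refl)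
      (auto simp: gen_edges_def intro!: flow_edge_energy[OF assms(3)] edge_energy_nonneg)
  also have "\<dots> = (\<Sum>\<^sub>\<infinity>P\<in>(\<Union>(x, y)\<in>?E. paths \<Omega> Q x y). ennreal (W P * edge_energy (f (hd P)) (f (last P))))"
    unfolding case_prod_unfold using assms(1)
    by (intro sum_infsum) (auto simp: paths_def intro: nonneg_summable_on_complete)
  also have "(\<Union>(x, y)\<in>?E. paths \<Omega> Q x y) = Gamma \<Omega> Q Qt"
    by (rule Gamma_eq_UN_paths[OF gen assms(1), symmetric])
  finally show ?thesis .
qed

lemma path_energy_le_Gamma:
  assumes "finite \<Omega>" "reversible_gen \<Omega> \<pi> Q" "regular \<Omega> Q r f" "r \<ge> 2" "P \<in> Gamma \<Omega> Q Qt"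
  shows "edge_energy (f (hd P)) (f (last P))
    \<le> 10 * path_weight r P * (\<Sum>(u, v)\<in>path_edges P. edge_energy (f u) (f v))"
  unfolding path_weight_def
proof (rule edge_energy_hd_last_le_path)
  obtain x y where P: "P \<in> paths \<Omega> Q x y" using assms(5) by (auto simp: Gamma_def split: if_splits)
  then show "length P \<ge> 2" "\<forall>x\<in>set P. f x > 0"
    using assms(3) by (auto simp: paths_def regular_def)
  have "ln r \<ge> ln 2" using assms(4) by simp
  then show "ln r \<ge> 1/2" using ln2_ge_two_thirds by linarith
  show "\<forall>(u, v)\<in>path_edges P. \<bar>ln (f u) - ln (f v)\<bar> \<le> ln r"
    using paths_path_edges[OF P] regular_abs_ln_diff_le[OF assms(2,1,3)] assms(4) by auto
qed

lemma congestion_edge_le: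
  assumes "(u, v) \<in> gen_edges \<Omega> Q" "\<pi> u > 0"
  shows "(\<Sum>\<^sub>\<infinity>P\<in>{P \<in> Gamma \<Omega> Q Qt. edge_in u v P}. ennreal (W P * path_weight r P))
    \<le> ennreal (\<pi> u * Q u v) * congestion \<Omega> \<pi> Q Qt W r"
proof -
  let ?S = "\<Sum>\<^sub>\<infinity>P\<in>{P \<in> Gamma \<Omega> Q Qt. edge_in u v P}. ennreal (W P * path_weight r P)"
  have pq: "\<pi> u * Q u v > 0" "\<pi> u \<noteq> 0" "Q u v \<noteq> 0" using assms by (auto simp: gen_edges_def)
  have "ennreal (1 / (\<pi> u * Q u v)) * ?S \<le> congestion \<Omega> \<pi> Q Qt W r"
    unfolding congestion_def path_weight_def
    by (rule SUP_upper2[of "(u, v)"]) (use assms(1) in \<open>auto simp: gen_edges_def\<close>)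
  then have "ennreal (\<pi> u * Q u v) * (ennreal (1 / (\<pi> u * Q u v)) * ?S)
      \<le> ennreal (\<pi> u * Q u v) * congestion \<Omega> \<pi> Q Qt W r"
    by (rule mult_left_mono) simp
  moreover have "ennreal (\<pi> u * Q u v) * ennreal (1 / (\<pi> u * Q u v)) = 1"
    using pq by (simp flip: ennreal_mult)
  ultimately show ?thesis by (simp add: mult.assoc[symmetric])
qed

lemma flow_path_energy_le:
  assumes "finite \<Omega>" "reversible_gen \<Omega> \<pi> Q" "regular \<Omega> Q r f" "r \<ge> 2"
    and P: "P \<in> Gamma \<Omega> Q Qt" and W: "W P \<ge> 0"
  shows "ennreal (W P * edge_energy (f (hd P)) (f (last P)))
    \<le> (\<Sum>(u, v)\<in>gen_edges \<Omega> Q. ennreal (10 * edge_energy (f u) (f v)) *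
          (if edge_in u v P then ennreal (W P * path_weight r P) else 0))"
proof -
  let ?E = "gen_edges \<Omega> Q"
  have sub: "path_edges P \<subseteq> ?E"
    using assms(1,2) P by (intro Gamma_path_edges_subset) (auto simp: reversible_gen_def)
  have weight: "W P * path_weight r P \<ge> 0"
    using W assms(4) by (simp add: path_weight_def)
  have energy: "edge_energy (f u) (f v) \<ge> 0" if "(u, v) \<in> ?E" for u v
    using that assms(3) by (intro edge_energy_nonneg) (auto simp: gen_edges_def regular_def)
  have "W P * edge_energy (f (hd P)) (f (last P))
      \<le> W P * (10 * path_weight r P * (\<Sum>(u, v)\<in>path_edges P. edge_energy (f u) (f v)))"
    using path_energy_le_Gamma[OF assms(1-5)] W by (rule mult_left_mono)
  also have "\<dots> = (\<Sum>(u, v)\<in>path_edges P. 10 * edge_energy (f u) (f v) * (W P * path_weight r P))"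
    by (simp add: sum_distrib_left case_prod_unfold algebra_simps)
  also have "\<dots> = (\<Sum>(u, v)\<in>?E. if edge_in u v P then 10 * edge_energy (f u) (f v) * (W P * path_weight r P) else 0)"
    using sub assms(1) by (intro sum.mono_neutral_cong_left) auto
  finally have "ennreal (W P * edge_energy (f (hd P)) (f (last P)))
      \<le> ennreal (\<Sum>(u, v)\<in>?E. if edge_in u v P then 10 * edge_energy (f u) (f v) * (W P * path_weight r P) else 0)"
    by (rule ennreal_leI)
  also have "\<dots> = (\<Sum>(u, v)\<in>?E. ennreal (if edge_in u v P then 10 * edge_energy (f u) (f v) * (W P * path_weight r P) else 0))"
    using energy weight by (subst sum_ennreal[symmetric]) (auto simp: case_prod_unfold)
  also have "\<dots> = (\<Sum>(u, v)\<in>?E. ennreal (10 * edge_energy (f u) (f v)) *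
          (if edge_in u v P then ennreal (W P * path_weight r P) else 0))"
    using energy weight by (intro sum.cong refl) (auto simp: ennreal_mult)
  finally show ?thesis .
qed

lemma Dir_le_congestion:
  assumes "finite \<Omega>" "reversible_gen \<Omega> \<pi> Q" "reversible_gen \<Omega> \<pi>t Qt" "is_flow \<Omega> Q \<pi>t Qt W"
    and "r \<ge> 2" "regular \<Omega> Q r f"
  shows "ennreal (Dir \<Omega> \<pi>t Qt f) \<le> 10 * congestion \<Omega> \<pi> Q Qt W r * ennreal (Dir \<Omega> \<pi> Q f)"
proof -
  let ?\<Gamma> = "Gamma \<Omega> Q Qt" and ?E = "gen_edges \<Omega> Q" and ?c = "congestion \<Omega> \<pi> Q Qt W r"
  let ?\<rho> = "\<lambda>P. ennreal (W P * path_weight r P)"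
  have f: "\<forall>x\<in>\<Omega>. f x > 0" using assms(6) by (simp add: regular_def)
  have "ennreal 2 * ennreal (Dir \<Omega> \<pi>t Qt f)
      = (\<Sum>\<^sub>\<infinity>P\<in>?\<Gamma>. ennreal (W P * edge_energy (f (hd P)) (f (last P))))"
    using Dir_eq_flow_sum[OF assms(1,3,4) f] by (simp add: ennreal_mult')
  also have "\<dots> \<le> (\<Sum>\<^sub>\<infinity>P\<in>?\<Gamma>. \<Sum>(u, v)\<in>?E. ennreal (10 * edge_energy (f u) (f v)) *
      (if edge_in u v P then ?\<rho> P else 0))"
    using assms(4) by (intro infsum_mono nonneg_summable_on_complete flow_path_energy_le[OF assms(1,2,6,5)])
      (auto simp: is_flow_def)
  also have "\<dots> = (\<Sum>(u, v)\<in>?E. ennreal (10 * edge_energy (f u) (f v)) *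
      (\<Sum>\<^sub>\<infinity>P\<in>{P \<in> ?\<Gamma>. edge_in u v P}. ?\<rho> P))"
    using infsum_sum_if_ennreal[where E = ?E and A = ?\<Gamma> and \<rho> = ?\<rho>
        and c = "\<lambda>(u, v). ennreal (10 * edge_energy (f u) (f v))" and R = "\<lambda>(u, v) P. edge_in u v P"]
      assms(1)
    by (simp add: case_prod_unfold)
  also have "\<dots> \<le> (\<Sum>(u, v)\<in>?E. ennreal (10 * edge_energy (f u) (f v)) * (ennreal (\<pi> u * Q u v) * ?c))"
  proof (intro sum_mono, clarify)
    fix u v assume "(u, v) \<in> ?E"
    then show "ennreal (10 * edge_energy (f u) (f v)) * (\<Sum>\<^sub>\<infinity>P\<in>{P \<in> ?\<Gamma>. edge_in u v P}. ?\<rho> P)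
        \<le> ennreal (10 * edge_energy (f u) (f v)) * (ennreal (\<pi> u * Q u v) * ?c)"
      using assms(2) by (intro mult_left_mono congestion_edge_le) (auto simp: reversible_gen_def gen_edges_def)
  qed
  also have "\<dots> = 10 * ?c * (\<Sum>(u, v)\<in>?E. ennreal (\<pi> u * Q u v) * ennreal (edge_energy (f u) (f v)))"
    by (simp add: sum_distrib_left case_prod_unfold ennreal_mult' mult_ac)
  also have "\<dots> = 10 * ?c * ennreal (2 * Dir \<Omega> \<pi> Q f)"
    unfolding ennreal_two_Dir_eq_sum[OF assms(1,2) f] ..
  also have "\<dots> = ennreal 2 * (10 * ?c * ennreal (Dir \<Omega> \<pi> Q f))"
    by (simp add: ennreal_mult' mult_ac)
  finally show ?thesis by (simp add: ennreal_mult_le_mult_iff)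
qed

section \<open>The regularized MLSI constant\<close>

lemma alpha_reg_le_comparison:
  assumes "finite \<Omega>" "reversible_gen \<Omega> \<pi> Q" "reversible_gen \<Omega> \<pi>t Qt" "a > 0"
    and "\<forall>x\<in>\<Omega>. \<pi> x \<le> a * \<pi>t x" "MLSI \<Omega> \<pi>t Qt \<alpha>t"
    and comparison: "\<forall>f. regular \<Omega> Q r f \<longrightarrow> ennreal (Dir \<Omega> \<pi>t Qt f) \<le> K * ennreal (Dir \<Omega> \<pi> Q f)"
  shows "alpha_reg \<Omega> \<pi> Q r \<le> ennreal a * K * ennreal \<alpha>t"
proof (cases "K * ennreal \<alpha>t = top")
  case True
  then show ?thesis using assms(4) by (simp add: mult.assoc)
next
  case False
  then obtain c where c: "K * ennreal \<alpha>t = ennreal c" "c \<ge> 0"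
    by (cases "K * ennreal \<alpha>t") auto
  have "alpha_reg \<Omega> \<pi> Q r \<le> ennreal (a * c)"
    unfolding alpha_reg_def
  proof (rule Inf_lower, intro CollectI exI[of _ "a * c"] conjI refl allI impI)
    show "a * c \<ge> 0" using assms(4) c(2) by simp
    fix f assume reg: "regular \<Omega> Q r f"
    then have f: "\<forall>x\<in>\<Omega>. f x > 0" by (simp add: regular_def)
    have "ennreal (\<alpha>t * Dir \<Omega> \<pi>t Qt f) = ennreal \<alpha>t * ennreal (Dir \<Omega> \<pi>t Qt f)"
      using Dir_nonneg[OF assms(1,3) f] by (rule ennreal_mult'')
    also have "\<dots> \<le> ennreal \<alpha>t * (K * ennreal (Dir \<Omega> \<pi> Q f))"
      using comparison reg by (simp add: mult_left_mono)
    also have "\<dots> = (K * ennreal \<alpha>t) * ennreal (Dir \<Omega> \<pi> Q f)"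
      by (simp add: mult_ac)
    also have "\<dots> = ennreal (c * Dir \<Omega> \<pi> Q f)"
      using c Dir_nonneg[OF assms(1,2) f] by (simp add: ennreal_mult)
    finally have "\<alpha>t * Dir \<Omega> \<pi>t Qt f \<le> c * Dir \<Omega> \<pi> Q f"
      using c(2) Dir_nonneg[OF assms(1,2) f] by simp
    have "Ent \<Omega> \<pi> f \<le> a * Ent \<Omega> \<pi>t f"
      using assms(1,2,3,5) f by (intro Ent_le_mult_Ent) (auto simp: reversible_gen_def)
    also have "\<dots> \<le> a * (\<alpha>t * Dir \<Omega> \<pi>t Qt f)"
      using assms(4,6) f by (intro mult_left_mono) (auto simp: MLSI_def)
    also have "\<dots> \<le> a * (c * Dir \<Omega> \<pi> Q f)"
      using \<open>\<alpha>t * Dir \<Omega> \<pi>t Qt f \<le> c * Dir \<Omega> \<pi> Q f\<close> assms(4) by simp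
    finally show "Ent \<Omega> \<pi> f \<le> a * c * Dir \<Omega> \<pi> Q f" by (simp add: mult.assoc)
  qed
  then show ?thesis using assms(4) c by (simp add: ennreal_mult mult.assoc)
qed

theorem theorem2:
  shows "\<exists>C::real. C > 0 \<and>
    (\<forall>(\<Omega>::nat set) \<pi> Q \<pi>t Qt W (a::real) (\<alpha>t::real) (r::real).
       finite \<Omega> \<and> \<Omega> \<noteq> {} \<and>
       reversible_gen \<Omega> \<pi> Q \<and> reversible_gen \<Omega> \<pi>t Qt \<and>
       is_flow \<Omega> Q \<pi>t Qt W \<and>
       a > 0 \<and> (\<forall>\<omega>\<in>\<Omega>. \<pi> \<omega> \<le> a * \<pi>t \<omega>) \<and>
       MLSI \<Omega> \<pi>t Qt \<alpha>t \<and> r \<ge> 2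
       \<longrightarrow> alpha_reg \<Omega> \<pi> Q r \<le>
             ennreal C * ennreal a * congestion \<Omega> \<pi> Q Qt W r * ennreal \<alpha>t)"
proof (intro exI[of _ "10::real"] conjI allI impI)
  fix \<Omega> :: "nat set" and \<pi> Q \<pi>t Qt W and a \<alpha>t r :: real
  assume "finite \<Omega> \<and> \<Omega> \<noteq> {} \<and> reversible_gen \<Omega> \<pi> Q \<and> reversible_gen \<Omega> \<pi>t Qt \<and>
    is_flow \<Omega> Q \<pi>t Qt W \<and> a > 0 \<and> (\<forall>\<omega>\<in>\<Omega>. \<pi> \<omega> \<le> a * \<pi>t \<omega>) \<and> MLSI \<Omega> \<pi>t Qt \<alpha>t \<and> r \<ge> 2"
  then have hyps: "finite \<Omega>" "reversible_gen \<Omega> \<pi> Q" "reversible_gen \<Omega> \<pi>t Qt" "is_flow \<Omega> Q \<pi>t Qt W"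
      "a > 0" "\<forall>\<omega>\<in>\<Omega>. \<pi> \<omega> \<le> a * \<pi>t \<omega>" "MLSI \<Omega> \<pi>t Qt \<alpha>t" "r \<ge> 2"
    by auto
  have "\<forall>f. regular \<Omega> Q r f \<longrightarrow>
      ennreal (Dir \<Omega> \<pi>t Qt f) \<le> 10 * congestion \<Omega> \<pi> Q Qt W r * ennreal (Dir \<Omega> \<pi> Q f)"
    using hyps Dir_le_congestion by blast
  then have "alpha_reg \<Omega> \<pi> Q r \<le> ennreal a * (10 * congestion \<Omega> \<pi> Q Qt W r) * ennreal \<alpha>t"
    using hyps by (intro alpha_reg_le_comparison)
  then show "alpha_reg \<Omega> \<pi> Q r \<le> ennreal 10 * ennreal a * congestion \<Omega> \<pi> Q Qt W r * ennreal \<alpha>t"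
    by (simp add: mult_ac)
qed simp

end
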